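(* Let $L$ be a cell complexity function, i.e. a function $L(y,z)$ of two positive integer arguments with $L(y,z)>0$ whenever $z>0$, monotonically increasing in $y$ and in $z$. Consider a family, indexed by the working-zone size $N\to\infty$, of pairs $(\mathcal{A}_1,\mathcal{A}_2)$ where $\mathcal{A}_1$ is a 1-layered FDCA and $\mathcal{A}_2$ is a 2-layered FDCA, both with working zone of size $N$ and both recognizing the same nontrivial class $D$ of input configurations. Let $P_1=|D|$; let $P_2$ be the cardinality of the class of local configurations of layer $1$ recognized by the distinguished layer-$2$ cell of $\mathcal{A}_2$; let $p$ be the cardinality of the class of local configurations of layer $0$ recognized by a layer-$1$ cell of $\mathcal{A}_2$; let $n=|N_1|$ be the size of the basic neighborhood of layer $1$ of $\mathcal{A}_2$; and assume $P_1,P_2,p>0$. The sequential time complexities are $\lambda(\mathcal{A}_1)=L(N,P_1)$ and $\lambda(\mathcal{A}_2)=N\cdot L(n,p)+L(N,P_2)$. Then $\mathcal{A}_2$ achieves speedup over $\mathcal{A}_1$, i.e. $\lambda(\mathcal{A}_2)/\lambda(\mathcal{A}_1)\to 0$ as $N\to\infty$, if and only if both of the following hold as $N\to\infty$: (C1) $\dfrac{L(N,P_2)}{L(N,P_1)}\to 0$, and (C2) $\dfrac{N\cdot L(n,p)}{L(N,P_1)}\to 0$.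
   Context: A dynamic cellular automaton (DCA) of dimension $d$ is a sequence of layers $\sigma_i=(d,k_i,N_i,f_i)$, $i=0,1,\dots$, on the grid of cells $C=\mathbb{Z}^d$; layer $i$ has alphabet $\Sigma_i=\{0,\dots,k_i-1\}$, a basic neighborhood $N_i\subseteq\mathbb{Z}^d$ (a box $\prod_j[-r_{i,j},r_{i,j}]$) and a local map $f_i:\Sigma_{i-1}^{N_i}\to\Sigma_i$ (not defined for layer 0). A configuration of layer $i$ is a map $X_i:C\to\Sigma_i$; the local configuration at $c$ is $x_{i-1,c}(z)=X_{i-1}(c+z)$ for $z\in N_i$, and $X_i(c)=f_i(x_{i-1,c})$. A finite DCA (FDCA) has in addition a finite working zone $W\subset C$, with fixed boundary conditions (cells outside $W$ are in a special state). Here $d=2$, neighborhoods are squares $[-r_i,r_i]^2$, $W=[w]^2$, and all alphabets are $\{0,1\}$. An FDCA recognizes a class $D$ of input (layer-0) configurations by cell $c$ of layer $i$ if there is a state $k$ with $X_i(c)=k$ iff $X_0\in D$; a cell $c$ of layer $i$ recognizes a class $E$ of local configurations of layer $i-1$ if there is a state $k$ with $f_i(x_{i-1,c})=k$ iff $x_{i-1,c}\in E$. A 1-layered (resp. 2-layered) FDCA is one having a cell $c\in W$ with $c+N_1=W$ (resp. $c+N_2=W$), recognition being done by that top-layer cell, whose basic neighborhood therefore has size $N=|W|$. The cell complexity $L(n,p)$ of a cell is a function of the size $n$ of its basic neighborhood and the cardinality $p$ of the class of local configurations it recognizes (those mapped to $1$). *)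

theory Defs
  imports Complex_Main
begin

type_synonym cell = "int \<times> int"

text \<open>A (layer) configuration restricted to the working zone: cells in W carry
  Some state (a bit), cells outside W carry the special boundary state None.
  A local configuration is a map from offsets z to states; offsets outside
  the basic neighborhood are mapped to None (normalisation).\<close>
type_synonym conf = "cell \<Rightarrow> bool option"
type_synonym lconf = "cell \<Rightarrow> bool option"

definition cadd :: "cell \<Rightarrow> cell \<Rightarrow> cell" where
  "cadd c z = (fst c + fst z, snd c + snd z)"

definition box :: "nat \<Rightarrow> cell set" where
  "box r = {z. \<bar>fst z\<bar> \<le> int r \<and> \<bar>snd z\<bar> \<le> int r}"

definition zone :: "nat \<Rightarrow> cell set" where
  "zone w = {1..int w} \<times> {1..int w}"

definition configs :: "nat \<Rightarrow> conf set" where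
  "configs w = {X. \<forall>c. X c = None \<longleftrightarrow> c \<notin> zone w}"

definition local_conf :: "nat \<Rightarrow> conf \<Rightarrow> cell \<Rightarrow> lconf" where
  "local_conf r X c = (\<lambda>z. if z \<in> box r then X (cadd c z) else None)"

definition layer_step :: "nat \<Rightarrow> nat \<Rightarrow> (lconf \<Rightarrow> bool) \<Rightarrow> conf \<Rightarrow> conf" where
  "layer_step w r f X = (\<lambda>c. if c \<in> zone w then Some (f (local_conf r X c)) else None)"

definition full_lconfs :: "nat \<Rightarrow> lconf set" where
  "full_lconfs r = {x. \<forall>z. (z \<in> box r \<longrightarrow> x z \<noteq> None) \<and> (z \<notin> box r \<longrightarrow> x z = None)}"

record fdca1 =
  fdca1_w :: nat
  fdca1_r :: nat
  fdca1_f :: "lconf \<Rightarrow> bool"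
  fdca1_c :: cell

definition wf_fdca1 :: "fdca1 \<Rightarrow> bool" where
  "wf_fdca1 A \<longleftrightarrow> fdca1_c A \<in> zone (fdca1_w A)
     \<and> cadd (fdca1_c A) ` box (fdca1_r A) = zone (fdca1_w A)"

definition run1 :: "fdca1 \<Rightarrow> conf \<Rightarrow> conf" where
  "run1 A X = layer_step (fdca1_w A) (fdca1_r A) (fdca1_f A) X"

definition recognizes1 :: "fdca1 \<Rightarrow> conf set \<Rightarrow> bool" where
  "recognizes1 A D \<longleftrightarrow> D \<subseteq> configs (fdca1_w A) \<and>
     (\<exists>k. \<forall>X \<in> configs (fdca1_w A). run1 A X (fdca1_c A) = Some k \<longleftrightarrow> X \<in> D)"

record fdca2 =
  fdca2_w :: nat
  fdca2_r1 :: nat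
  fdca2_f1 :: "lconf \<Rightarrow> bool"
  fdca2_r2 :: nat
  fdca2_f2 :: "lconf \<Rightarrow> bool"
  fdca2_c :: cell

definition wf_fdca2 :: "fdca2 \<Rightarrow> bool" where
  "wf_fdca2 A \<longleftrightarrow> fdca2_c A \<in> zone (fdca2_w A)
     \<and> cadd (fdca2_c A) ` box (fdca2_r2 A) = zone (fdca2_w A)"

definition run2 :: "fdca2 \<Rightarrow> conf \<Rightarrow> conf" where
  "run2 A X = layer_step (fdca2_w A) (fdca2_r2 A) (fdca2_f2 A)
                (layer_step (fdca2_w A) (fdca2_r1 A) (fdca2_f1 A) X)"

definition recognizes2 :: "fdca2 \<Rightarrow> conf set \<Rightarrow> bool" where
  "recognizes2 A D \<longleftrightarrow> D \<subseteq> configs (fdca2_w A) \<and>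
     (\<exists>k. \<forall>X \<in> configs (fdca2_w A). run2 A X (fdca2_c A) = Some k \<longleftrightarrow> X \<in> D)"

definition P2_of :: "fdca2 \<Rightarrow> nat" where
  "P2_of A = card {x \<in> full_lconfs (fdca2_r2 A). fdca2_f2 A x}"

definition p_of :: "fdca2 \<Rightarrow> nat" where
  "p_of A = card {x \<in> full_lconfs (fdca2_r1 A). fdca2_f1 A x}"

definition n_of :: "fdca2 \<Rightarrow> nat" where
  "n_of A = card (box (fdca2_r1 A))"

definition cell_complexity :: "(nat \<Rightarrow> nat \<Rightarrow> real) \<Rightarrow> bool" where
  "cell_complexity L \<longleftrightarrow>
     (\<forall>y z. 0 < y \<longrightarrow> 0 < z \<longrightarrow> 0 < L y z) \<and>
     (\<forall>y y' z. 0 < y \<longrightarrow> 0 < z \<longrightarrow> y \<le> y' \<longrightarrow> L y z \<le> L y' z) \<and>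
     (\<forall>y z z'. 0 < y \<longrightarrow> 0 < z \<longrightarrow> z \<le> z' \<longrightarrow> L y z \<le> L y z')"

definition lambda1 :: "(nat \<Rightarrow> nat \<Rightarrow> real) \<Rightarrow> fdca1 \<Rightarrow> conf set \<Rightarrow> real" where
  "lambda1 L A D = L (card (zone (fdca1_w A))) (card D)"

definition lambda2 :: "(nat \<Rightarrow> nat \<Rightarrow> real) \<Rightarrow> fdca2 \<Rightarrow> real" where
  "lambda2 L A = real (card (zone (fdca2_w A))) * L (n_of A) (p_of A)
                 + L (card (zone (fdca2_w A))) (P2_of A)"

end

theory Submission
  imports Defs
begin

text \<open>The speedup ratio \<open>\<lambda>(A\<^sub>2)/\<lambda>(A\<^sub>1)\<close> is literally the sum of the ratios in (C1) and (C2).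
  Since \<open>L\<close> is positive on positive arguments, both summands are nonnegative once the
  working zone is nonempty, and a sum of nonnegative sequences tends to 0 iff each summand
  does.\<close>

lemma card_box_pos: "0 < card (box r)"
proof -
  have "box r = {-int r..int r} \<times> {-int r..int r}"
    unfolding box_def by auto
  moreover have "(0, 0) \<in> box r"
    unfolding box_def by simp
  ultimately show ?thesis
    by (auto simp: card_gt_0_iff)
qed

lemma cell_complexity_pos: "cell_complexity L \<Longrightarrow> 0 < y \<Longrightarrow> 0 < z \<Longrightarrow> 0 < L y z"
  unfolding cell_complexity_def by blast

lemma tendsto_add_zero_iff_nonneg:
  fixes f g :: "'a \<Rightarrow> real"
  assumes "eventually (\<lambda>x. 0 \<le> f x \<and> 0 \<le> g x) F"
  shows "((\<lambda>x. f x + g x) \<longlongrightarrow> 0) F \<longleftrightarrow> (f \<longlongrightarrow> 0) F \<and> (g \<longlongrightarrow> 0) F"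
proof
  assume sum: "((\<lambda>x. f x + g x) \<longlongrightarrow> 0) F"
  have "eventually (\<lambda>x. 0 \<le> f x) F" "eventually (\<lambda>x. f x \<le> f x + g x) F"
    "eventually (\<lambda>x. 0 \<le> g x) F" "eventually (\<lambda>x. g x \<le> f x + g x) F"
    using assms by (auto elim!: eventually_mono)
  then show "(f \<longlongrightarrow> 0) F \<and> (g \<longlongrightarrow> 0) F"
    using tendsto_sandwich[OF _ _ tendsto_const sum] by blast
next
  assume "(f \<longlongrightarrow> 0) F \<and> (g \<longlongrightarrow> 0) F"
  then show "((\<lambda>x. f x + g x) \<longlongrightarrow> 0) F"
    using tendsto_add_zero by blast
qed

lemma lambda2_div_lambda1:
  assumes "fdca1_w A1 = w" and "fdca2_w A2 = w"
  shows "lambda2 L A2 / lambda1 L A1 D =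
      L (card (zone w)) (P2_of A2) / L (card (zone w)) (card D)
    + real (card (zone w)) * L (n_of A2) (p_of A2) / L (card (zone w)) (card D)"
  unfolding lambda2_def lambda1_def assms by (simp add: add_divide_distrib)

theorem theorem8:
  fixes L :: "nat \<Rightarrow> nat \<Rightarrow> real"
    and w :: "nat \<Rightarrow> nat"
    and A1 :: "nat \<Rightarrow> fdca1"
    and A2 :: "nat \<Rightarrow> fdca2"
    and D :: "nat \<Rightarrow> conf set"
  assumes L: "cell_complexity L"
    and N_inf: "filterlim (\<lambda>i. card (zone (w i))) at_top sequentially"
    and wf1: "\<And>i. wf_fdca1 (A1 i)" and w1: "\<And>i. fdca1_w (A1 i) = w i"
    and wf2: "\<And>i. wf_fdca2 (A2 i)" and w2: "\<And>i. fdca2_w (A2 i) = w i"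
    and rec1: "\<And>i. recognizes1 (A1 i) (D i)"
    and rec2: "\<And>i. recognizes2 (A2 i) (D i)"
    and nontriv: "\<And>i. D i \<noteq> {} \<and> D i \<noteq> configs (w i)"
    and P1_pos: "\<And>i. 0 < card (D i)"
    and P2_pos: "\<And>i. 0 < P2_of (A2 i)"
    and p_pos: "\<And>i. 0 < p_of (A2 i)"
  shows "((\<lambda>i. lambda2 L (A2 i) / lambda1 L (A1 i) (D i)) \<longlonglongrightarrow> 0)
     \<longleftrightarrow> ((\<lambda>i. L (card (zone (w i))) (P2_of (A2 i)) / L (card (zone (w i))) (card (D i)))
             \<longlonglongrightarrow> 0)
       \<and> ((\<lambda>i. real (card (zone (w i))) * L (n_of (A2 i)) (p_of (A2 i))
                 / L (card (zone (w i))) (card (D i))) \<longlonglongrightarrow> 0)"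
proof -
  have "eventually (\<lambda>i. 1 \<le> card (zone (w i))) sequentially"
    using N_inf by (simp add: filterlim_at_top)
  then have "eventually (\<lambda>i.
      0 \<le> L (card (zone (w i))) (P2_of (A2 i)) / L (card (zone (w i))) (card (D i)) \<and>
      0 \<le> real (card (zone (w i))) * L (n_of (A2 i)) (p_of (A2 i))
             / L (card (zone (w i))) (card (D i))) sequentially"
  proof (rule eventually_mono)
    fix i
    assume "1 \<le> card (zone (w i))"
    then have "0 < L (card (zone (w i))) (P2_of (A2 i))"
      "0 < L (card (zone (w i))) (card (D i))" "0 < L (n_of (A2 i)) (p_of (A2 i))"
      using cell_complexity_pos[OF L] P1_pos P2_pos p_pos card_box_pos
      by (simp_all add: n_of_def)
    then show "0 \<le> L (card (zone (w i))) (P2_of (A2 i)) / L (card (zone (w i))) (card (D i)) \<and>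
      0 \<le> real (card (zone (w i))) * L (n_of (A2 i)) (p_of (A2 i))
             / L (card (zone (w i))) (card (D i))"
      by simp
  qed
  then show ?thesis
    unfolding lambda2_div_lambda1[OF w1 w2]
    by (rule tendsto_add_zero_iff_nonneg)
qed

end
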